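(* Let $\mathcal H$ be a finite-dimensional Hilbert space and let $|\psi\rangle\in(\mathbb{C}^2)^{\otimes n}\otimes\mathcal H$ be a unit vector of the form \[ |\psi\rangle=\big(\alpha|0^n\rangle+\delta|v_1\rangle+\beta|v_{\ge2}\rangle\big)\otimes|g\rangle+\gamma|\perp\rangle, \] where $\alpha,\beta,\delta,\gamma$ are nonnegative reals; $|v_1\rangle,|v_{\ge2}\rangle\in(\mathbb{C}^2)^{\otimes n}$, $|g\rangle\in\mathcal H$ and $|\perp\rangle$ are unit vectors; $|v_1\rangle$ is supported only on computational basis strings of Hamming weight $1$; $|v_{\ge2}\rangle$ is supported only on strings of Hamming weight at least $2$; and $|\perp\rangle$ is orthogonal to every vector of the form $|0^n\rangle\otimes|h\rangle$ ($|h\rangle\in\mathcal H$) and to every vector of the form $|x\rangle\otimes|g\rangle$ ($|x\rangle\in(\mathbb{C}^2)^{\otimes n}$). Suppose $\alpha^2=2/3+c$ with $c\ge0$. Then for every pure product state $|\pi\rangle=|\pi_1\rangle\otimes\cdots\otimes|\pi_n\rangle$ on $n$ qubits, \[ \big\|(\langle\pi|\otimes I)|\psi\rangle\big\|_2^2\le\Big(\alpha+\min\Big\{\delta,\sqrt{\tfrac{2}{27}}\,\tfrac{\delta^2}{c}\Big\}\Big)^2, \] where for $c=0$ the minimum is interpreted as $\delta$.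
   Context: $|0^n\rangle$ is the all-zeros computational basis state of $n$ qubits; $I$ is the identity on $\mathcal H$. *)

theory Defs
  imports Complex_Main
begin

text \<open>Computational basis strings of n qubits are bool lists of length n.
  Vectors of (C^2)^{tensor n} are functions on bool lists supported on length-n lists;
  the finite-dimensional Hilbert space H is C^'h for a finite type 'h (standard inner product);
  vectors of (C^2)^{tensor n} (x) H are functions bool list => 'h => complex.\<close>

definition strs :: "nat \<Rightarrow> bool list set" where
  "strs n = {xs. length xs = n}"

definition hamming_weight :: "bool list \<Rightarrow> nat" where
  "hamming_weight xs = length (filter id xs)"

definition qsupp :: "nat \<Rightarrow> (bool list \<Rightarrow> complex) \<Rightarrow> bool" where
  "qsupp n v \<longleftrightarrow> (\<forall>xs. v xs \<noteq> 0 \<longrightarrow> length xs = n)"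

definition jsupp :: "nat \<Rightarrow> (bool list \<Rightarrow> 'h \<Rightarrow> complex) \<Rightarrow> bool" where
  "jsupp n v \<longleftrightarrow> (\<forall>xs i. v xs i \<noteq> 0 \<longrightarrow> length xs = n)"

definition ip_q :: "nat \<Rightarrow> (bool list \<Rightarrow> complex) \<Rightarrow> (bool list \<Rightarrow> complex) \<Rightarrow> complex" where
  "ip_q n u v = (\<Sum>xs\<in>strs n. cnj (u xs) * v xs)"

definition ip_h :: "('h::finite \<Rightarrow> complex) \<Rightarrow> ('h \<Rightarrow> complex) \<Rightarrow> complex" where
  "ip_h u v = (\<Sum>i\<in>UNIV. cnj (u i) * v i)"

definition ip_j :: "nat \<Rightarrow> (bool list \<Rightarrow> 'h::finite \<Rightarrow> complex) \<Rightarrow> (bool list \<Rightarrow> 'h \<Rightarrow> complex) \<Rightarrow> complex" where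
  "ip_j n u v = (\<Sum>xs\<in>strs n. \<Sum>i\<in>UNIV. cnj (u xs i) * v xs i)"

definition tensor :: "(bool list \<Rightarrow> complex) \<Rightarrow> ('h \<Rightarrow> complex) \<Rightarrow> (bool list \<Rightarrow> 'h \<Rightarrow> complex)" where
  "tensor v g = (\<lambda>xs i. v xs * g i)"

definition ket0 :: "nat \<Rightarrow> bool list \<Rightarrow> complex" where
  "ket0 n = (\<lambda>xs. if xs = replicate n False then 1 else 0)"

definition prod_state :: "nat \<Rightarrow> (nat \<Rightarrow> bool \<Rightarrow> complex) \<Rightarrow> bool list \<Rightarrow> complex" where
  "prod_state n p = (\<lambda>xs. if length xs = n then (\<Prod>k<n. p k (xs ! k)) else 0)"

text \<open>Partial inner product (<pi| (x) I)|psi>, a vector in H.\<close>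
definition partial_bra :: "nat \<Rightarrow> (bool list \<Rightarrow> complex) \<Rightarrow> (bool list \<Rightarrow> 'h \<Rightarrow> complex) \<Rightarrow> ('h \<Rightarrow> complex)" where
  "partial_bra n p psi = (\<lambda>i. \<Sum>xs\<in>strs n. cnj (p xs) * psi xs i)"

definition hnorm2 :: "('h::finite \<Rightarrow> complex) \<Rightarrow> real" where
  "hnorm2 v = (\<Sum>i\<in>UNIV. (cmod (v i))\<^sup>2)"

end

theory Submission
  imports Defs "HOL-Analysis.Analysis"
begin

(* Applying <pi| to the qubit register leaves <pi|phi> g + gamma <pi|perp>, where phi is the
   superposition of |0^n>, |v_1>, |v_>=2>; the two summands are orthogonal, so the squared norm is
   |<pi|phi>|^2 + gamma^2 |<pi|perp>|^2.  Let w0, w1, w2 be the probabilities that measuring |pi>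
   yields a string of Hamming weight 0, 1, >= 2.  Cauchy-Schwarz on the supports gives
   |<pi|phi>| <= alpha sqrt w0 + delta sqrt w1 + beta sqrt w2, and since perp vanishes on 0^n,
   |<pi|perp>|^2 <= 1 - w0.  For a product state the weights satisfy w2 (2 w0 - w1) <= w1^2, an
   invariant that survives appending a qubit.  Under this constraint and beta^2 + gamma^2 <= 1/3 - c,
   everything except delta sqrt w1 contributes at most (alpha - c w1 / (4 k))^2 with k = sqrt (2/27),
   and AM-GM absorbs delta sqrt w1 into c w1 / (4 k) + k delta^2 / c. *)

lemma finite_strs [simp]: "finite (strs n)"
  unfolding strs_def using finite_lists_length_eq[of "UNIV :: bool set" n] by simp

lemma strs_0: "strs 0 = {[]}"
  by (auto simp: strs_def)

lemma replicate_False_in_strs [simp]: "replicate n False \<in> strs n"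
  by (simp add: strs_def)

lemma sum_strs_Suc:
  "(\<Sum>xs\<in>strs (Suc n). f xs) = (\<Sum>ys\<in>strs n. f (ys @ [False]) + f (ys @ [True]))"
proof -
  have strs_Suc: "strs (Suc n) = (\<lambda>ys. ys @ [False]) ` strs n \<union> (\<lambda>ys. ys @ [True]) ` strs n"
  proof (rule set_eqI)
    fix xs
    show "xs \<in> strs (Suc n) \<longleftrightarrow> xs \<in> (\<lambda>ys. ys @ [False]) ` strs n \<union> (\<lambda>ys. ys @ [True]) ` strs n"
    proof (cases xs rule: rev_cases)
      case (snoc ys b)
      then show ?thesis by (cases b) (auto simp: strs_def)
    qed (auto simp: strs_def)
  qed
  have inj: "inj_on (\<lambda>ys. ys @ [b]) A" for b :: bool and A
    by (simp add: inj_on_def)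
  have "(\<Sum>xs\<in>strs (Suc n). f xs)
      = (\<Sum>xs\<in>(\<lambda>ys. ys @ [False]) ` strs n. f xs) + (\<Sum>xs\<in>(\<lambda>ys. ys @ [True]) ` strs n. f xs)"
    unfolding strs_Suc by (rule sum.union_disjoint) auto
  also have "\<dots> = (\<Sum>ys\<in>strs n. f (ys @ [False])) + (\<Sum>ys\<in>strs n. f (ys @ [True]))"
    by (simp add: sum.reindex[OF inj])
  finally show ?thesis by (simp add: sum.distrib)
qed

lemma hamming_weight_snoc: "hamming_weight (xs @ [b]) = hamming_weight xs + (if b then 1 else 0)"
  by (simp add: hamming_weight_def)

lemma hamming_weight_eq_0_iff:
  assumes "xs \<in> strs n"
  shows "hamming_weight xs = 0 \<longleftrightarrow> xs = replicate n False"
proof -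
  have "hamming_weight xs = 0 \<longleftrightarrow> xs = replicate (length xs) False"
    by (induction xs) (auto simp: hamming_weight_def)
  then show ?thesis using assms by (simp add: strs_def)
qed

lemma prod_state_snoc:
  assumes "length xs = n"
  shows "prod_state (Suc n) p (xs @ [b]) = prod_state n p xs * p n b"
proof -
  have "(\<Prod>k<n. p k ((xs @ [b]) ! k)) = (\<Prod>k<n. p k (xs ! k))"
    by (rule prod.cong) (use assms in \<open>auto simp: nth_append\<close>)
  moreover have "(xs @ [b]) ! n = b"
    using assms nth_append_length[of xs b "[]"] by simp
  ultimately show ?thesis
    using assms by (simp add: prod_state_def prod.lessThan_Suc)
qed

definition hamming_mass :: "nat \<Rightarrow> (nat \<Rightarrow> bool \<Rightarrow> complex) \<Rightarrow> (nat \<Rightarrow> bool) \<Rightarrow> real" where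
  "hamming_mass n p P = (\<Sum>xs\<in>{xs \<in> strs n. P (hamming_weight xs)}. (cmod (prod_state n p xs))\<^sup>2)"

abbreviation mass0 :: "nat \<Rightarrow> (nat \<Rightarrow> bool \<Rightarrow> complex) \<Rightarrow> real" where
  "mass0 n p \<equiv> hamming_mass n p (\<lambda>h. h = 0)"

abbreviation mass1 :: "nat \<Rightarrow> (nat \<Rightarrow> bool \<Rightarrow> complex) \<Rightarrow> real" where
  "mass1 n p \<equiv> hamming_mass n p (\<lambda>h. h = 1)"

abbreviation mass_ge2 :: "nat \<Rightarrow> (nat \<Rightarrow> bool \<Rightarrow> complex) \<Rightarrow> real" where
  "mass_ge2 n p \<equiv> hamming_mass n p (\<lambda>h. 2 \<le> h)"

lemma hamming_mass_nonneg: "0 \<le> hamming_mass n p P"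
  unfolding hamming_mass_def by (rule sum_nonneg) simp

lemma hamming_mass_disj:
  assumes "\<And>h. \<not> (P h \<and> Q h)"
  shows "hamming_mass n p (\<lambda>h. P h \<or> Q h) = hamming_mass n p P + hamming_mass n p Q"
  unfolding hamming_mass_def
  by (subst sum.union_disjoint[symmetric]) (use assms in \<open>auto intro!: sum.cong\<close>)

lemma hamming_mass_Suc:
  "hamming_mass (Suc n) p P
     = (cmod (p n False))\<^sup>2 * hamming_mass n p P + (cmod (p n True))\<^sup>2 * hamming_mass n p (\<lambda>h. P (Suc h))"
proof -
  have "hamming_mass (Suc n) p P
      = (\<Sum>xs\<in>strs n. (cmod (p n False))\<^sup>2 * (if P (hamming_weight xs) then (cmod (prod_state n p xs))\<^sup>2 else 0)
          + (cmod (p n True))\<^sup>2 * (if P (Suc (hamming_weight xs)) then (cmod (prod_state n p xs))\<^sup>2 else 0))"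
    unfolding hamming_mass_def sum.inter_filter[OF finite_strs] sum_strs_Suc
    by (rule sum.cong) (auto simp: strs_def prod_state_snoc hamming_weight_snoc norm_mult power_mult_distrib)
  then show ?thesis
    by (simp add: hamming_mass_def sum.inter_filter sum.distrib sum_distrib_left)
qed

lemma hamming_mass_True:
  assumes "\<forall>k<n. (cmod (p k False))\<^sup>2 + (cmod (p k True))\<^sup>2 = 1"
  shows "hamming_mass n p (\<lambda>h. True) = 1"
  using assms
proof (induction n)
  case 0
  then show ?case by (simp add: hamming_mass_def strs_0 prod_state_def)
next
  case (Suc n)
  then show ?case by (simp add: hamming_mass_Suc algebra_simps)
qed

lemma hamming_mass_split: "hamming_mass n p (\<lambda>h. True) = mass0 n p + mass1 n p + mass_ge2 n p"
proof -
  have "(\<lambda>h::nat. True) = (\<lambda>h. (h = 0 \<or> h = 1) \<or> 2 \<le> h)" by auto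
  moreover have "hamming_mass n p (\<lambda>h. (h = 0 \<or> h = 1) \<or> 2 \<le> h)
      = hamming_mass n p (\<lambda>h. h = 0 \<or> h = 1) + mass_ge2 n p"
    by (rule hamming_mass_disj) auto
  moreover have "hamming_mass n p (\<lambda>h. h = 0 \<or> h = 1) = mass0 n p + mass1 n p"
    by (rule hamming_mass_disj) auto
  ultimately show ?thesis by simp
qed

lemma hamming_mass_pos: "hamming_mass n p (\<lambda>h. 1 \<le> h) = mass1 n p + mass_ge2 n p"
proof -
  have "(\<lambda>h::nat. 1 \<le> h) = (\<lambda>h. h = 1 \<or> 2 \<le> h)" by auto
  moreover have "hamming_mass n p (\<lambda>h. h = 1 \<or> 2 \<le> h) = mass1 n p + mass_ge2 n p"
    by (rule hamming_mass_disj) auto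
  ultimately show ?thesis by simp
qed

lemma mass_Suc:
  "mass0 (Suc n) p = (cmod (p n False))\<^sup>2 * mass0 n p"
  "mass1 (Suc n) p = (cmod (p n False))\<^sup>2 * mass1 n p + (cmod (p n True))\<^sup>2 * mass0 n p"
  "mass_ge2 (Suc n) p = (cmod (p n False))\<^sup>2 * mass_ge2 n p + (cmod (p n True))\<^sup>2 * (mass1 n p + mass_ge2 n p)"
proof -
  show "mass0 (Suc n) p = (cmod (p n False))\<^sup>2 * mass0 n p"
    by (simp add: hamming_mass_Suc) (simp add: hamming_mass_def)
  show "mass1 (Suc n) p = (cmod (p n False))\<^sup>2 * mass1 n p + (cmod (p n True))\<^sup>2 * mass0 n p"
    by (simp add: hamming_mass_Suc)
  have "(\<lambda>h. 2 \<le> Suc h) = (\<lambda>h. 1 \<le> h)" by auto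
  then show "mass_ge2 (Suc n) p
      = (cmod (p n False))\<^sup>2 * mass_ge2 n p + (cmod (p n True))\<^sup>2 * (mass1 n p + mass_ge2 n p)"
    by (simp only: hamming_mass_Suc hamming_mass_pos)
qed

(* With a = |p n False|^2 and b = |p n True|^2 the conclusion is the invariant after appending
   qubit n, cf. mass_Suc. *)
lemma weight_inequality_step:
  fixes a b w0 w1 w2 :: real
  assumes "0 \<le> a" "0 \<le> b" "0 \<le> w0" "0 \<le> w1" "0 \<le> w2" and weights: "w2 * (2 * w0 - w1) \<le> w1\<^sup>2"
  shows "(a * w2 + b * (w1 + w2)) * (2 * (a * w0) - (a * w1 + b * w0)) \<le> (a * w1 + b * w0)\<^sup>2"
proof -
  have "0 \<le> a\<^sup>2 * (w1\<^sup>2 - w2 * (2 * w0 - w1))"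
    using weights by simp
  moreover have "0 \<le> a * b * (w1\<^sup>2 + w1 * w2 - w0 * w2)"
  proof -
    have "w2 * (2 * w0 - w1) = 2 * (w0 * w2) - w1 * w2"
      by (simp add: algebra_simps)
    then have "w0 * w2 \<le> w1\<^sup>2 + w1 * w2"
      using weights mult_nonneg_nonneg[OF \<open>0 \<le> w0\<close> \<open>0 \<le> w2\<close>] by linarith
    then show ?thesis using assms by simp
  qed
  moreover have "0 \<le> b\<^sup>2 * ((w1 + w2) * w0 + w0\<^sup>2)"
    using assms by simp
  moreover have "(a * w1 + b * w0)\<^sup>2 - (a * w2 + b * (w1 + w2)) * (2 * (a * w0) - (a * w1 + b * w0))
      = a\<^sup>2 * (w1\<^sup>2 - w2 * (2 * w0 - w1)) + a * b * (w1\<^sup>2 + w1 * w2 - w0 * w2) + b\<^sup>2 * ((w1 + w2) * w0 + w0\<^sup>2)"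
    by (simp add: algebra_simps power2_eq_square)
  ultimately show ?thesis by linarith
qed

lemma hamming_mass_weight_inequality: "mass_ge2 n p * (2 * mass0 n p - mass1 n p) \<le> (mass1 n p)\<^sup>2"
proof (induction n)
  case 0
  have "{xs \<in> strs 0. 2 \<le> hamming_weight xs} = {}"
    by (auto simp: strs_0 hamming_weight_def)
  then have "mass_ge2 0 p = 0"
    unfolding hamming_mass_def by (simp only: sum.empty)
  then show ?case by simp
next
  case (Suc n)
  show ?case unfolding mass_Suc
    by (rule weight_inequality_step[OF _ _ hamming_mass_nonneg hamming_mass_nonneg hamming_mass_nonneg Suc.IH])
      simp_all
qed

lemma cnj_mult_self: "cnj z * z = complex_of_real ((cmod z)\<^sup>2)"
  using complex_norm_square[of z] by (simp add: mult.commute)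

lemma ip_q_self: "ip_q n v v = complex_of_real (\<Sum>xs\<in>strs n. (cmod (v xs))\<^sup>2)"
  by (simp add: ip_q_def cnj_mult_self)

lemma ip_q_self_eq_1_iff: "ip_q n v v = 1 \<longleftrightarrow> (\<Sum>xs\<in>strs n. (cmod (v xs))\<^sup>2) = 1"
  by (simp only: ip_q_self of_real_eq_1_iff)

lemma ip_h_self: "ip_h u u = complex_of_real (hnorm2 u)"
  by (simp add: ip_h_def hnorm2_def cnj_mult_self)

lemma ip_j_self: "ip_j n w w = complex_of_real (\<Sum>xs\<in>strs n. hnorm2 (w xs))"
  by (simp add: ip_j_def hnorm2_def cnj_mult_self)

lemma ip_j_tensor_left: "ip_j n (tensor x h) w = (\<Sum>xs\<in>strs n. cnj (x xs) * ip_h h (w xs))"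
  by (simp add: ip_j_def ip_h_def tensor_def sum_distrib_left mult.assoc)

lemma sum_cnj_delta_mult:
  assumes "finite A"
  shows "(\<Sum>x\<in>A. cnj (if x = a then 1 else 0) * f x) = (if a \<in> A then f a else (0 :: complex))"
proof -
  have "(\<Sum>x\<in>A. cnj (if x = a then 1 else 0) * f x) = (\<Sum>x\<in>A. if x = a then f x else 0)"
    by (rule sum.cong) auto
  then show ?thesis using assms by (simp add: sum.delta)
qed

lemma ip_q_ket0: "ip_q n (ket0 n) (ket0 n) = 1"
  by (simp add: ip_q_def ket0_def sum_cnj_delta_mult)

lemma hnorm2_lincomb_orthogonal:
  assumes "ip_h u w = 0"
  shows "hnorm2 (\<lambda>i. a * u i + b * w i) = (cmod a)\<^sup>2 * hnorm2 u + (cmod b)\<^sup>2 * hnorm2 w"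
proof -
  have "complex_of_real (hnorm2 (\<lambda>i. a * u i + b * w i))
      = (cnj a * a) * ip_h u u + (cnj b * b) * ip_h w w
        + (cnj a * b) * ip_h u w + cnj (cnj a * b * ip_h u w)"
    unfolding ip_h_self[symmetric]
    by (simp add: ip_h_def sum.distrib sum_distrib_left algebra_simps)
  also have "\<dots> = complex_of_real ((cmod a)\<^sup>2 * hnorm2 u + (cmod b)\<^sup>2 * hnorm2 w)"
    using assms by (simp add: ip_h_self cnj_mult_self)
  finally show ?thesis
    by (simp only: of_real_eq_iff)
qed

lemma Cauchy_Schwarz_supported:
  fixes u v :: "'a \<Rightarrow> complex"
  assumes "finite A" "B \<subseteq> A" "\<forall>x\<in>A. v x \<noteq> 0 \<longrightarrow> x \<in> B"
  shows "(cmod (\<Sum>x\<in>A. cnj (u x) * v x))\<^sup>2 \<le> (\<Sum>x\<in>B. (cmod (u x))\<^sup>2) * (\<Sum>x\<in>A. (cmod (v x))\<^sup>2)"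
proof -
  have "(\<Sum>x\<in>A. cnj (u x) * v x) = (\<Sum>x\<in>B. cnj (u x) * v x)"
    by (rule sum.mono_neutral_right) (use assms in auto)
  then have "cmod (\<Sum>x\<in>A. cnj (u x) * v x) \<le> (\<Sum>x\<in>B. cmod (u x) * cmod (v x))"
    by (metis (no_types, lifting) norm_sum norm_mult complex_mod_cnj sum.cong)
  then have "(cmod (\<Sum>x\<in>A. cnj (u x) * v x))\<^sup>2 \<le> (\<Sum>x\<in>B. cmod (u x) * cmod (v x))\<^sup>2"
    by (rule power_mono) simp
  also have "\<dots> \<le> (\<Sum>x\<in>B. (cmod (u x))\<^sup>2) * (\<Sum>x\<in>B. (cmod (v x))\<^sup>2)"
    by (rule Cauchy_Schwarz_ineq_sum)
  also have "\<dots> \<le> (\<Sum>x\<in>B. (cmod (u x))\<^sup>2) * (\<Sum>x\<in>A. (cmod (v x))\<^sup>2)"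
    using assms by (intro mult_left_mono sum_mono2 sum_nonneg) auto
  finally show ?thesis .
qed

lemma norm_ip_q_le_supported:
  assumes "B \<subseteq> strs n" "\<forall>xs. v xs \<noteq> 0 \<longrightarrow> xs \<in> B" "ip_q n v v = 1"
  shows "cmod (ip_q n u v) \<le> sqrt (\<Sum>xs\<in>B. (cmod (u xs))\<^sup>2)"
proof (rule real_le_rsqrt)
  have "(\<Sum>xs\<in>strs n. (cmod (v xs))\<^sup>2) = 1"
    using assms(3) by (simp only: ip_q_self_eq_1_iff)
  then show "(cmod (ip_q n u v))\<^sup>2 \<le> (\<Sum>xs\<in>B. (cmod (u xs))\<^sup>2)"
    using Cauchy_Schwarz_supported[OF finite_strs assms(1), of v u] assms(2)
    by (simp add: ip_q_def)
qed

lemma hnorm2_partial_bra_le_supported: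
  assumes "B \<subseteq> strs n" "\<forall>xs\<in>strs n. xs \<notin> B \<longrightarrow> (\<forall>i. w xs i = 0)"
  shows "hnorm2 (partial_bra n u w) \<le> (\<Sum>xs\<in>B. (cmod (u xs))\<^sup>2) * (\<Sum>xs\<in>strs n. hnorm2 (w xs))"
proof -
  have "hnorm2 (partial_bra n u w)
      \<le> (\<Sum>i\<in>UNIV. (\<Sum>xs\<in>B. (cmod (u xs))\<^sup>2) * (\<Sum>xs\<in>strs n. (cmod (w xs i))\<^sup>2))"
    unfolding hnorm2_def partial_bra_def
    by (intro sum_mono Cauchy_Schwarz_supported[OF finite_strs assms(1)]) (use assms(2) in blast)
  also have "\<dots> = (\<Sum>xs\<in>B. (cmod (u xs))\<^sup>2) * (\<Sum>xs\<in>strs n. hnorm2 (w xs))"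
    by (simp add: hnorm2_def sum_distrib_left sum.swap[of _ "UNIV :: 'a set"])
  finally show ?thesis .
qed

lemma quadratic_form_ge_on_diagonal:
  fixes a b e X Y :: real
  assumes "0 \<le> Y" "Y \<le> X" "0 \<le> a" "b \<le> 2 * a"
  shows "(a - b + e) * Y\<^sup>2 \<le> a * X\<^sup>2 - b * X * Y + e * Y\<^sup>2"
proof -
  have "b * Y \<le> a * (X + Y)"
    using assms mult_right_mono[of b "2 * a" Y] mult_left_mono[of "2 * Y" "X + Y" a] by linarith
  then have "0 \<le> (X - Y) * (a * (X + Y) - b * Y)"
    using assms by simp
  then show ?thesis
    by (simp add: algebra_simps power2_eq_square)
qed

lemma square_minus_mult_antimono:
  fixes x y s :: real
  assumes "x \<le> y" "x + y \<le> s"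
  shows "y\<^sup>2 - s * y \<le> x\<^sup>2 - s * x"
proof -
  have "0 \<le> (y - x) * (s - x - y)" using assms by simp
  then show ?thesis by (simp add: algebra_simps power2_eq_square)
qed

lemma sqrt_gap_lower_bound:
  fixes a b c :: real
  assumes "0 \<le> a" "0 \<le> b" "a\<^sup>2 = 2/3 + c" "b\<^sup>2 = 2/3 - 2 * c" "0 \<le> c"
  shows "c \<le> 2 * sqrt (2/27) * (a - b)"
proof -
  have "b \<le> a"
    by (rule power2_le_imp_le) (use assms in simp_all)
  have "(6 * sqrt (2/27 :: real))\<^sup>2 = 8/3"
    by (simp add: power_mult_distrib)
  moreover have "(a + b)\<^sup>2 \<le> 2 * (a\<^sup>2 + b\<^sup>2)"
    using zero_le_power2[of "a - b"] unfolding power2_sum power2_diff distrib_left by linarith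
  moreover have "2 * (a\<^sup>2 + b\<^sup>2) = 8/3 - 2 * c"
    using assms(3,4) by simp
  ultimately have "(a + b)\<^sup>2 \<le> (6 * sqrt (2/27))\<^sup>2"
    using assms(5) by linarith
  then have "a + b \<le> 6 * sqrt (2/27)"
    by (rule power2_le_imp_le) simp
  then have "(a - b) * (a + b) \<le> (a - b) * (6 * sqrt (2/27))"
    using \<open>b \<le> a\<close> by (simp add: mult_left_mono)
  moreover have "(a - b) * (a + b) = 3 * c"
    using assms(3,4) by (simp add: algebra_simps power2_eq_square)
  ultimately show ?thesis by (simp add: mult_ac)
qed

lemma mult_le_amgm:
  fixes c k d y :: real
  assumes "0 < c" "0 < k"
  shows "d * y \<le> k * d\<^sup>2 / c + c * y\<^sup>2 / (4 * k)"
proof -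
  have "0 \<le> (2 * k * d - c * y)\<^sup>2 / (4 * k * c)"
    using assms by simp
  also have "\<dots> = k * d\<^sup>2 / c + c * y\<^sup>2 / (4 * k) - d * y"
    using assms by (simp add: field_simps power2_eq_square)
  finally show ?thesis by simp
qed

lemma add_sq_le_sqrt_add_sq:
  fixes a b d :: real
  assumes "0 \<le> a" "0 \<le> b" "0 \<le> d"
  shows "(a + d)\<^sup>2 + b \<le> (sqrt (a\<^sup>2 + b) + d)\<^sup>2"
proof -
  have "a \<le> sqrt (a\<^sup>2 + b)" using assms by (simp add: real_le_rsqrt)
  then have "a * d \<le> sqrt (a\<^sup>2 + b) * d" using assms by (simp add: mult_right_mono)
  then show ?thesis using assms by (simp add: power2_sum)
qed

lemma weight_inequality_sqrt:
  fixes w0 w1 w2 :: real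
  assumes "0 \<le> w0" "0 \<le> w1" "0 \<le> w2" "w2 * (2 * w0 - w1) \<le> w1\<^sup>2"
  shows "2 * sqrt (w0 * w2) \<le> sqrt 2 * sqrt (w1 + w2) * sqrt w1"
proof -
  have "2 * sqrt (w0 * w2) = sqrt (4 * (w0 * w2))"
    by (simp add: real_sqrt_mult)
  also have "\<dots> \<le> sqrt (2 * ((w1 + w2) * w1))"
    using assms(4) by (simp add: algebra_simps power2_eq_square)
  also have "\<dots> = sqrt 2 * sqrt (w1 + w2) * sqrt w1"
    by (simp add: real_sqrt_mult)
  finally show ?thesis .
qed

lemma quadratic_form_ge_sqrt2:
  fixes \<alpha> \<beta> r s X Y :: real
  assumes "0 \<le> Y" "Y \<le> X" "0 \<le> \<alpha>" "0 \<le> s" "s\<^sup>2 = 2" "0 \<le> r" "\<beta> \<le> r" "s * r \<le> \<alpha>"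
  shows "\<alpha> * (\<alpha> - s * r) * Y\<^sup>2 \<le> (\<alpha>\<^sup>2 - r\<^sup>2) * X\<^sup>2 - s * \<alpha> * \<beta> * X * Y + \<beta>\<^sup>2 * Y\<^sup>2"
proof -
  have ssr: "s * (s * r) = 2 * r"
    by (metis assms(5) mult.assoc power2_eq_square)
  have "2 * r \<le> s * \<alpha>"
    using ssr mult_left_mono[OF assms(8,4)] by linarith
  then have "r\<^sup>2 - (s * \<alpha>) * r \<le> \<beta>\<^sup>2 - (s * \<alpha>) * \<beta>"
    using assms(7) by (intro square_minus_mult_antimono) simp_all
  then have "\<alpha> * (\<alpha> - s * r) \<le> \<alpha>\<^sup>2 - r\<^sup>2 - s * \<alpha> * \<beta> + \<beta>\<^sup>2"
    by (simp add: algebra_simps power2_eq_square)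
  then have "\<alpha> * (\<alpha> - s * r) * Y\<^sup>2 \<le> (\<alpha>\<^sup>2 - r\<^sup>2 - s * \<alpha> * \<beta> + \<beta>\<^sup>2) * Y\<^sup>2"
    by (rule mult_right_mono) simp
  also have "\<dots> \<le> (\<alpha>\<^sup>2 - r\<^sup>2) * X\<^sup>2 - s * \<alpha> * \<beta> * X * Y + \<beta>\<^sup>2 * Y\<^sup>2"
  proof (rule quadratic_form_ge_on_diagonal[OF assms(1,2)])
    have "(s * r)\<^sup>2 \<le> \<alpha>\<^sup>2"
      by (rule power_mono[OF assms(8)]) (use assms(4,6) in simp)
    then have "2 * r\<^sup>2 \<le> \<alpha>\<^sup>2"
      using assms(5) by (simp add: power_mult_distrib)
    then show "0 \<le> \<alpha>\<^sup>2 - r\<^sup>2"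
      using zero_le_power2[of r] by linarith
    have "s * \<alpha> * \<beta> \<le> \<alpha> * (s * r)"
      using mult_left_mono[OF assms(7), of "s * \<alpha>"] assms(3,4) by (simp add: mult_ac)
    also have "\<dots> \<le> \<alpha>\<^sup>2"
      using mult_left_mono[OF assms(8,3)] by (simp add: power2_eq_square)
    finally show "s * \<alpha> * \<beta> \<le> 2 * (\<alpha>\<^sup>2 - r\<^sup>2)"
      using \<open>2 * r\<^sup>2 \<le> \<alpha>\<^sup>2\<close> unfolding right_diff_distrib by linarith
  qed
  finally show ?thesis .
qed

lemma off_weight_one_bound:
  fixes \<alpha> \<beta> \<gamma> c w0 w1 w2 :: real
  assumes "0 \<le> \<alpha>" "0 \<le> \<beta>" "0 \<le> w0" "0 \<le> w1" "0 \<le> w2" "w0 + w1 + w2 = 1"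
    and weights: "w2 * (2 * w0 - w1) \<le> w1\<^sup>2"
    and coeffs: "\<beta>\<^sup>2 + \<gamma>\<^sup>2 \<le> 1/3 - c" and alpha: "\<alpha>\<^sup>2 = 2/3 + c" and "0 \<le> c"
  shows "(\<alpha> * sqrt w0 + \<beta> * sqrt w2)\<^sup>2 + \<gamma>\<^sup>2 * (1 - w0) \<le> (\<alpha> - c * w1 / (4 * sqrt (2/27)))\<^sup>2"
proof -
  define s where "s = sqrt 2"
  define r where "r = sqrt (1/3 - c)"
  define X where "X = sqrt (1 - w0)"
  define Y where "Y = sqrt w1"
  have s2: "s\<^sup>2 = 2" "0 \<le> s" by (simp_all add: s_def)
  have "0 \<le> 1/3 - c"
    using coeffs zero_le_power2[of \<beta>] zero_le_power2[of \<gamma>] by linarith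
  then have r2: "r\<^sup>2 = 1/3 - c" "0 \<le> r" by (simp_all add: r_def)
  have X2: "X\<^sup>2 = w1 + w2" and Y2: "Y\<^sup>2 = w1" and "0 \<le> Y" and "Y \<le> X"
    using assms by (simp_all add: X_def Y_def)
  have \<beta>_le: "\<beta> \<le> r"
    by (rule power2_le_imp_le) (use coeffs r2 zero_le_power2[of \<gamma>] in linarith)+
  have sr_le: "s * r \<le> \<alpha>"
    by (rule power2_le_imp_le) (use r2 s2 alpha \<open>0 \<le> \<alpha>\<close> \<open>0 \<le> c\<close> in \<open>simp_all add: power_mult_distrib\<close>)
  have "1 - w0 = w1 + w2"
    using assms(6) by simp
  then have cross: "2 * sqrt (w0 * w2) \<le> s * X * Y"
    using weight_inequality_sqrt[OF assms(3-5) weights] by (simp add: s_def X_def Y_def)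
  have "(\<alpha> * sqrt w0 + \<beta> * sqrt w2)\<^sup>2 + \<gamma>\<^sup>2 * (1 - w0)
      = \<alpha>\<^sup>2 * w0 + \<alpha> * \<beta> * (2 * sqrt (w0 * w2)) + \<beta>\<^sup>2 * w2 + \<gamma>\<^sup>2 * X\<^sup>2"
    using assms X2 by (simp add: power2_sum power_mult_distrib real_sqrt_mult)
  also have "\<dots> \<le> \<alpha>\<^sup>2 * w0 + \<alpha> * \<beta> * (s * X * Y) + \<beta>\<^sup>2 * w2 + (r\<^sup>2 - \<beta>\<^sup>2) * X\<^sup>2"
    using coeffs r2 assms cross by (intro add_mono mult_left_mono mult_right_mono) simp_all
  also have "\<dots> = \<alpha>\<^sup>2 - ((\<alpha>\<^sup>2 - r\<^sup>2) * X\<^sup>2 - s * \<alpha> * \<beta> * X * Y + \<beta>\<^sup>2 * Y\<^sup>2)"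
  proof -
    have w0_eq: "w0 = 1 - X\<^sup>2" and w2_eq: "w2 = X\<^sup>2 - Y\<^sup>2"
      using X2 Y2 \<open>w0 + w1 + w2 = 1\<close> by simp_all
    show ?thesis unfolding w0_eq w2_eq by (simp add: algebra_simps)
  qed
  also have "\<dots> \<le> \<alpha>\<^sup>2 - \<alpha> * (\<alpha> - s * r) * Y\<^sup>2"
    using quadratic_form_ge_sqrt2[OF \<open>0 \<le> Y\<close> \<open>Y \<le> X\<close> \<open>0 \<le> \<alpha>\<close> s2(2,1) r2(2) \<beta>_le sr_le] by simp
  also have "\<dots> \<le> \<alpha>\<^sup>2 - \<alpha> * (c / (2 * sqrt (2/27))) * Y\<^sup>2"
  proof -
    have "c / (2 * sqrt (2/27)) \<le> \<alpha> - s * r"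
      using sqrt_gap_lower_bound[of \<alpha> "s * r" c] assms s2 r2
      by (simp add: power_mult_distrib field_simps)
    then have "\<alpha> * (c / (2 * sqrt (2/27))) * Y\<^sup>2 \<le> \<alpha> * (\<alpha> - s * r) * Y\<^sup>2"
      using \<open>0 \<le> \<alpha>\<close> by (intro mult_right_mono mult_left_mono) simp_all
    then show ?thesis by linarith
  qed
  also have "\<dots> = \<alpha>\<^sup>2 - 2 * \<alpha> * (c * w1 / (4 * sqrt (2/27)))"
    using Y2 by (simp add: field_simps)
  also have "\<dots> \<le> (\<alpha> - c * w1 / (4 * sqrt (2/27)))\<^sup>2"
    by (simp add: power2_diff)
  finally show ?thesis .
qed

lemma add_weight_one_term_le:
  fixes G \<alpha> \<delta> c w1 :: real
  assumes "G \<le> \<alpha> - c * w1 / (4 * sqrt (2/27))" "0 \<le> c" "0 \<le> \<delta>" "0 \<le> w1" "w1 \<le> 1"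
  shows "G + \<delta> * sqrt w1 \<le> \<alpha> + (if c = 0 then \<delta> else min \<delta> (sqrt (2/27) * \<delta>\<^sup>2 / c))"
proof -
  define k where "k = sqrt (2/27 :: real)"
  have "0 < k" by (simp add: k_def)
  have "0 \<le> c * w1 / (4 * k)"
    using assms \<open>0 < k\<close> by simp
  moreover have "\<delta> * sqrt w1 \<le> \<delta>"
    using assms(3-5) by (simp add: mult_left_le)
  ultimately have "G + \<delta> * sqrt w1 \<le> \<alpha> + \<delta>"
    using assms(1) unfolding k_def by linarith
  moreover have "G + \<delta> * sqrt w1 \<le> \<alpha> + k * \<delta>\<^sup>2 / c" if "0 < c"
    using mult_le_amgm[OF that \<open>0 < k\<close>, of \<delta> "sqrt w1"] assms(1,4) by (simp add: k_def)
  ultimately show ?thesis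
    using assms(2) unfolding k_def by auto
qed

lemma overlap_bound_real:
  fixes \<alpha> \<beta> \<gamma> \<delta> c w0 w1 w2 F Q :: real
  assumes "0 \<le> \<alpha>" "0 \<le> \<beta>" "0 \<le> \<delta>" and norm: "\<alpha>\<^sup>2 + \<beta>\<^sup>2 + \<gamma>\<^sup>2 + \<delta>\<^sup>2 = 1"
    and alpha: "\<alpha>\<^sup>2 = 2/3 + c" and "0 \<le> c"
    and "0 \<le> w0" "0 \<le> w1" "0 \<le> w2" "w0 + w1 + w2 = 1"
    and weights: "w2 * (2 * w0 - w1) \<le> w1\<^sup>2"
    and "0 \<le> F" and F: "F \<le> \<alpha> * sqrt w0 + \<delta> * sqrt w1 + \<beta> * sqrt w2"
    and Q: "Q \<le> 1 - w0"
  shows "F\<^sup>2 + \<gamma>\<^sup>2 * Q \<le> (\<alpha> + (if c = 0 then \<delta> else min \<delta> (sqrt (2/27) * \<delta>\<^sup>2 / c)))\<^sup>2"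
proof -
  define k where "k = sqrt (2/27 :: real)"
  define a where "a = \<alpha> * sqrt w0 + \<beta> * sqrt w2"
  define b where "b = \<gamma>\<^sup>2 * (1 - w0)"
  have "0 < k" by (simp add: k_def)
  have "0 \<le> a" "0 \<le> b" "w1 \<le> 1"
    using assms by (simp_all add: a_def b_def)
  have "c * w1 / (4 * k) \<le> \<alpha>"
  proof -
    have "c * w1 \<le> 1/3"
      using norm alpha assms zero_le_power2[of \<beta>] zero_le_power2[of \<gamma>] zero_le_power2[of \<delta>]
        mult_left_le[of w1 c] by linarith
    also have "1/3 \<le> \<alpha> * (4 * k)"
      by (rule power2_le_imp_le) (use alpha \<open>0 \<le> c\<close> \<open>0 \<le> \<alpha>\<close> \<open>0 < k\<close> in \<open>simp_all add: k_def power_mult_distrib power_divide\<close>)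
    finally show ?thesis using \<open>0 < k\<close> by (simp add: divide_le_eq)
  qed
  moreover have "a\<^sup>2 + b \<le> (\<alpha> - c * w1 / (4 * k))\<^sup>2"
    unfolding a_def b_def k_def
    by (rule off_weight_one_bound) (use assms zero_le_power2[of \<delta>] in linarith)+
  ultimately have "sqrt (a\<^sup>2 + b) \<le> \<alpha> - c * w1 / (4 * k)"
    by (simp add: real_le_lsqrt)
  then have sum_le: "sqrt (a\<^sup>2 + b) + \<delta> * sqrt w1 \<le> \<alpha> + (if c = 0 then \<delta> else min \<delta> (k * \<delta>\<^sup>2 / c))"
    using add_weight_one_term_le assms \<open>w1 \<le> 1\<close> unfolding k_def by blast
  have "F\<^sup>2 + \<gamma>\<^sup>2 * Q \<le> (a + \<delta> * sqrt w1)\<^sup>2 + b"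
    using F Q \<open>0 \<le> F\<close> unfolding a_def b_def
    by (intro add_mono power_mono mult_left_mono) simp_all
  also have "\<dots> \<le> (sqrt (a\<^sup>2 + b) + \<delta> * sqrt w1)\<^sup>2"
    using \<open>0 \<le> a\<close> \<open>0 \<le> b\<close> assms by (intro add_sq_le_sqrt_add_sq) simp_all
  also have "\<dots> \<le> (\<alpha> + (if c = 0 then \<delta> else min \<delta> (k * \<delta>\<^sup>2 / c)))\<^sup>2"
    using sum_le \<open>0 \<le> a\<close> \<open>0 \<le> b\<close> assms by (intro power_mono) simp_all
  finally show ?thesis unfolding k_def .
qed

lemma orthogonal_tensor_imp_ip_h_eq_0:
  assumes "\<forall>x. ip_j n (tensor x g) w = 0" "xs \<in> strs n"
  shows "ip_h g (w xs) = 0"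
proof -
  have "ip_j n (tensor (\<lambda>ys. if ys = xs then 1 else 0) g) w = ip_h g (w xs)"
    using assms(2) by (simp add: ip_j_tensor_left sum_cnj_delta_mult)
  then show ?thesis using assms(1) by simp
qed

lemma orthogonal_tensor_ket0_imp_eq_0:
  assumes "\<forall>h. ip_j n (tensor (ket0 n) h) w = 0"
  shows "w (replicate n False) i = 0"
proof -
  have "ip_j n (tensor (ket0 n) (\<lambda>j. if j = i then 1 else 0)) w = w (replicate n False) i"
    by (simp add: ip_j_tensor_left ip_h_def ket0_def sum_cnj_delta_mult)
  then show ?thesis using assms by simp
qed

lemma partial_bra_tensor_add:
  "partial_bra n u (\<lambda>xs i. tensor v g xs i + a * w xs i) = (\<lambda>i. ip_q n u v * g i + a * partial_bra n u w i)"
  by (simp add: partial_bra_def ip_q_def tensor_def sum.distrib sum_distrib_left sum_distrib_right algebra_simps)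

lemma hnorm2_partial_bra_tensor_add:
  fixes \<gamma> :: real
  assumes "hnorm2 g = 1" "\<forall>x. ip_j n (tensor x g) w = 0"
  shows "hnorm2 (partial_bra n u (\<lambda>xs i. tensor v g xs i + complex_of_real \<gamma> * w xs i))
       = (cmod (ip_q n u v))\<^sup>2 + \<gamma>\<^sup>2 * hnorm2 (partial_bra n u w)"
proof -
  have "ip_h g (partial_bra n u w) = (\<Sum>xs\<in>strs n. cnj (u xs) * ip_h g (w xs))"
    by (simp add: ip_h_def partial_bra_def sum_distrib_left sum.swap[of _ UNIV] algebra_simps)
  also have "\<dots> = 0"
    using orthogonal_tensor_imp_ip_h_eq_0[OF assms(2)] by simp
  finally show ?thesis
    using assms(1) by (simp add: partial_bra_tensor_add hnorm2_lincomb_orthogonal)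
qed

lemma ip_j_self_tensor_add:
  fixes \<gamma> :: real
  assumes "hnorm2 g = 1" "\<forall>x. ip_j n (tensor x g) w = 0"
  shows "ip_j n (\<lambda>xs i. tensor v g xs i + complex_of_real \<gamma> * w xs i)
                (\<lambda>xs i. tensor v g xs i + complex_of_real \<gamma> * w xs i)
       = ip_q n v v + complex_of_real (\<gamma>\<^sup>2) * ip_j n w w"
proof -
  have "hnorm2 (\<lambda>i. tensor v g xs i + complex_of_real \<gamma> * w xs i) = (cmod (v xs))\<^sup>2 + \<gamma>\<^sup>2 * hnorm2 (w xs)"
    if "xs \<in> strs n" for xs
    using hnorm2_lincomb_orthogonal[OF orthogonal_tensor_imp_ip_h_eq_0[OF assms(2) that], of "v xs"]
      assms(1) by (simp add: tensor_def)
  then show ?thesis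
    by (simp add: ip_j_self ip_q_self sum.distrib sum_distrib_left)
qed

lemma ip_q_self_weight_superposition:
  fixes \<alpha> \<delta> \<beta> :: real
  assumes "\<forall>xs. v1 xs \<noteq> 0 \<longrightarrow> length xs = n \<and> hamming_weight xs = 1"
    and "\<forall>xs. v2 xs \<noteq> 0 \<longrightarrow> length xs = n \<and> hamming_weight xs \<ge> 2"
    and "ip_q n v1 v1 = 1" "ip_q n v2 v2 = 1"
  shows "ip_q n (\<lambda>xs. complex_of_real \<alpha> * ket0 n xs + complex_of_real \<delta> * v1 xs + complex_of_real \<beta> * v2 xs)
                (\<lambda>xs. complex_of_real \<alpha> * ket0 n xs + complex_of_real \<delta> * v1 xs + complex_of_real \<beta> * v2 xs)
       = complex_of_real (\<alpha>\<^sup>2 + \<delta>\<^sup>2 + \<beta>\<^sup>2)"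
proof -
  have pointwise: "(cmod (complex_of_real \<alpha> * ket0 n xs + complex_of_real \<delta> * v1 xs + complex_of_real \<beta> * v2 xs))\<^sup>2
      = \<alpha>\<^sup>2 * (cmod (ket0 n xs))\<^sup>2 + \<delta>\<^sup>2 * (cmod (v1 xs))\<^sup>2 + \<beta>\<^sup>2 * (cmod (v2 xs))\<^sup>2" for xs
  proof -
    have "v1 xs = 0 \<or> v2 xs = 0"
    proof (rule ccontr)
      assume "\<not> (v1 xs = 0 \<or> v2 xs = 0)"
      then have "hamming_weight xs = 1" "2 \<le> hamming_weight xs"
        using assms(1,2) by blast+
      then show False by simp
    qed
    moreover have "ket0 n xs = 0 \<or> v1 xs = 0 \<and> v2 xs = 0"
    proof (cases "xs = replicate n False")
      case True
      then have "hamming_weight xs = 0"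
        using hamming_weight_eq_0_iff[OF replicate_False_in_strs[of n]] by simp
      then show ?thesis
        using assms(1,2) by (metis zero_neq_one not_numeral_le_zero)
    qed (simp add: ket0_def)
    ultimately have "ket0 n xs = 0 \<and> v1 xs = 0 \<or> ket0 n xs = 0 \<and> v2 xs = 0 \<or> v1 xs = 0 \<and> v2 xs = 0"
      by blast
    then show ?thesis by (auto simp: norm_mult power_mult_distrib)
  qed
  have "(\<Sum>xs\<in>strs n. (cmod (ket0 n xs))\<^sup>2) = 1" "(\<Sum>xs\<in>strs n. (cmod (v1 xs))\<^sup>2) = 1"
    "(\<Sum>xs\<in>strs n. (cmod (v2 xs))\<^sup>2) = 1"
    using assms(3,4) ip_q_ket0[of n] by (simp_all only: ip_q_self_eq_1_iff)
  then show ?thesis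
    by (simp add: ip_q_self pointwise sum.distrib flip: sum_distrib_left)
qed

lemma norm_ip_q_weight_superposition_le:
  fixes \<alpha> \<delta> \<beta> :: real
  assumes "0 \<le> \<alpha>" "0 \<le> \<delta>" "0 \<le> \<beta>"
    and v1_supp: "\<forall>xs. v1 xs \<noteq> 0 \<longrightarrow> length xs = n \<and> hamming_weight xs = 1"
    and v2_supp: "\<forall>xs. v2 xs \<noteq> 0 \<longrightarrow> length xs = n \<and> hamming_weight xs \<ge> 2"
    and "ip_q n v1 v1 = 1" "ip_q n v2 v2 = 1"
  shows "cmod (ip_q n (prod_state n p)
                 (\<lambda>xs. complex_of_real \<alpha> * ket0 n xs + complex_of_real \<delta> * v1 xs + complex_of_real \<beta> * v2 xs))
       \<le> \<alpha> * sqrt (mass0 n p) + \<delta> * sqrt (mass1 n p) + \<beta> * sqrt (mass_ge2 n p)"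
proof -
  define \<pi> where "\<pi> = prod_state n p"
  have mass_bound: "cmod (ip_q n \<pi> v) \<le> sqrt (hamming_mass n p P)"
    if "\<forall>xs. v xs \<noteq> 0 \<longrightarrow> length xs = n \<and> P (hamming_weight xs)" "ip_q n v v = 1" for v P
    unfolding hamming_mass_def \<pi>_def
    by (rule norm_ip_q_le_supported) (use that in \<open>auto simp: strs_def\<close>)
  have linear: "ip_q n \<pi> (\<lambda>xs. complex_of_real \<alpha> * ket0 n xs + complex_of_real \<delta> * v1 xs + complex_of_real \<beta> * v2 xs)
      = complex_of_real \<alpha> * ip_q n \<pi> (ket0 n) + complex_of_real \<delta> * ip_q n \<pi> v1
        + complex_of_real \<beta> * ip_q n \<pi> v2"
    by (simp add: ip_q_def sum.distrib sum_distrib_left algebra_simps)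
  have "cmod (ip_q n \<pi> (\<lambda>xs. complex_of_real \<alpha> * ket0 n xs + complex_of_real \<delta> * v1 xs + complex_of_real \<beta> * v2 xs))
      \<le> cmod (complex_of_real \<alpha> * ip_q n \<pi> (ket0 n)) + cmod (complex_of_real \<delta> * ip_q n \<pi> v1)
        + cmod (complex_of_real \<beta> * ip_q n \<pi> v2)"
    unfolding linear by (rule order_trans[OF norm_triangle_ineq add_right_mono[OF norm_triangle_ineq]])
  also have "\<dots> = \<alpha> * cmod (ip_q n \<pi> (ket0 n)) + \<delta> * cmod (ip_q n \<pi> v1) + \<beta> * cmod (ip_q n \<pi> v2)"
    using assms(1-3) by (simp add: norm_mult)
  also have "\<dots> \<le> \<alpha> * sqrt (mass0 n p) + \<delta> * sqrt (mass1 n p) + \<beta> * sqrt (mass_ge2 n p)"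
  proof -
    have "\<forall>xs. ket0 n xs \<noteq> 0 \<longrightarrow> length xs = n \<and> hamming_weight xs = 0"
      using hamming_weight_eq_0_iff[OF replicate_False_in_strs[of n]] by (simp add: ket0_def)
    then have "cmod (ip_q n \<pi> (ket0 n)) \<le> sqrt (mass0 n p)"
      using mass_bound[of "ket0 n" "\<lambda>h. h = 0"] ip_q_ket0 by simp
    moreover have "cmod (ip_q n \<pi> v1) \<le> sqrt (mass1 n p)"
      using mass_bound[of v1 "\<lambda>h. h = 1"] v1_supp assms(6) by simp
    moreover have "cmod (ip_q n \<pi> v2) \<le> sqrt (mass_ge2 n p)"
      using mass_bound[of v2 "\<lambda>h. 2 \<le> h"] v2_supp assms(7) by simp
    ultimately show ?thesis
      using assms(1-3) by (intro add_mono mult_left_mono) simp_all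
  qed
  finally show ?thesis unfolding \<pi>_def .
qed

lemma hnorm2_partial_bra_prod_state_le:
  assumes "\<forall>i. w (replicate n False) i = 0" "ip_j n w w = 1"
  shows "hnorm2 (partial_bra n (prod_state n p) w) \<le> mass1 n p + mass_ge2 n p"
proof -
  have "(\<Sum>xs\<in>strs n. hnorm2 (w xs)) = 1"
    using assms(2) by (simp only: ip_j_self of_real_eq_1_iff)
  moreover have "\<forall>xs\<in>strs n. xs \<notin> {xs \<in> strs n. 1 \<le> hamming_weight xs} \<longrightarrow> (\<forall>i. w xs i = 0)"
    using assms(1) hamming_weight_eq_0_iff[of _ n] by (auto simp: Suc_le_eq)
  ultimately have "hnorm2 (partial_bra n (prod_state n p) w) \<le> hamming_mass n p (\<lambda>h. 1 \<le> h)"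
    using hnorm2_partial_bra_le_supported[of "{xs \<in> strs n. 1 \<le> hamming_weight xs}" n w "prod_state n p"]
    by (simp add: hamming_mass_def)
  then show ?thesis by (simp only: hamming_mass_pos)
qed

theorem theorem4p4:
  fixes n :: nat
    and \<alpha> \<beta> \<delta> \<gamma> c :: real
    and v1 v2 :: "bool list \<Rightarrow> complex"
    and g :: "'h::finite \<Rightarrow> complex"
    and perp psi :: "bool list \<Rightarrow> 'h \<Rightarrow> complex"
    and p :: "nat \<Rightarrow> bool \<Rightarrow> complex"
  assumes nonneg: "\<alpha> \<ge> 0" "\<beta> \<ge> 0" "\<delta> \<ge> 0" "\<gamma> \<ge> 0"
    and v1_supp: "\<forall>xs. v1 xs \<noteq> 0 \<longrightarrow> length xs = n \<and> hamming_weight xs = 1"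
    and v2_supp: "\<forall>xs. v2 xs \<noteq> 0 \<longrightarrow> length xs = n \<and> hamming_weight xs \<ge> 2"
    and v1_unit: "ip_q n v1 v1 = 1"
    and v2_unit: "ip_q n v2 v2 = 1"
    and g_unit: "ip_h g g = 1"
    and perp_supp: "jsupp n perp"
    and perp_unit: "ip_j n perp perp = 1"
    and perp_orth0: "\<forall>h. ip_j n (tensor (ket0 n) h) perp = 0"
    and perp_orthg: "\<forall>x. ip_j n (tensor x g) perp = 0"
    and psi_def: "psi = (\<lambda>xs i. tensor (\<lambda>ys. complex_of_real \<alpha> * ket0 n ys
                     + complex_of_real \<delta> * v1 ys + complex_of_real \<beta> * v2 ys) g xs i
                     + complex_of_real \<gamma> * perp xs i)"
    and psi_unit: "ip_j n psi psi = 1"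
    and alpha_sq: "\<alpha>\<^sup>2 = 2/3 + c"
    and c_nonneg: "c \<ge> 0"
    and p_unit: "\<forall>k<n. (cmod (p k False))\<^sup>2 + (cmod (p k True))\<^sup>2 = 1"
  shows "hnorm2 (partial_bra n (prod_state n p) psi)
           \<le> (\<alpha> + (if c = 0 then \<delta> else min \<delta> (sqrt (2/27) * \<delta>\<^sup>2 / c)))\<^sup>2"
proof -
  define \<phi> where "\<phi> = (\<lambda>ys. complex_of_real \<alpha> * ket0 n ys + complex_of_real \<delta> * v1 ys + complex_of_real \<beta> * v2 ys)"
  have g: "hnorm2 g = 1"
    using g_unit by (simp only: ip_h_self of_real_eq_1_iff)
  have masses: "mass0 n p + mass1 n p + mass_ge2 n p = 1"
    using hamming_mass_True[OF p_unit] hamming_mass_split by simp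
  have "complex_of_real (\<alpha>\<^sup>2 + \<delta>\<^sup>2 + \<beta>\<^sup>2) + complex_of_real (\<gamma>\<^sup>2) * 1 = 1"
    using psi_unit unfolding psi_def ip_j_self_tensor_add[OF g perp_orthg] perp_unit
      ip_q_self_weight_superposition[OF v1_supp v2_supp v1_unit v2_unit] .
  then have "complex_of_real (\<alpha>\<^sup>2 + \<beta>\<^sup>2 + \<gamma>\<^sup>2 + \<delta>\<^sup>2) = 1"
    by (simp add: ac_simps)
  then have coeffs: "\<alpha>\<^sup>2 + \<beta>\<^sup>2 + \<gamma>\<^sup>2 + \<delta>\<^sup>2 = 1"
    by (simp only: of_real_eq_1_iff)
  have "hnorm2 (partial_bra n (prod_state n p) perp) \<le> mass1 n p + mass_ge2 n p"
    using orthogonal_tensor_ket0_imp_eq_0[OF perp_orth0] perp_unit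
    by (intro hnorm2_partial_bra_prod_state_le) auto
  then have "hnorm2 (partial_bra n (prod_state n p) perp) \<le> 1 - mass0 n p"
    using masses by linarith
  moreover have "cmod (ip_q n (prod_state n p) \<phi>)
      \<le> \<alpha> * sqrt (mass0 n p) + \<delta> * sqrt (mass1 n p) + \<beta> * sqrt (mass_ge2 n p)"
    unfolding \<phi>_def by (rule norm_ip_q_weight_superposition_le[OF nonneg(1,3,2) v1_supp v2_supp v1_unit v2_unit])
  ultimately show ?thesis
    unfolding psi_def \<phi>_def[symmetric] hnorm2_partial_bra_tensor_add[OF g perp_orthg]
    using overlap_bound_real[OF nonneg(1,2,3) coeffs alpha_sq c_nonneg hamming_mass_nonneg hamming_mass_nonneg
        hamming_mass_nonneg masses hamming_mass_weight_inequality]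
    by simp
qed

end
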